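(* Fix $N\in\mathbb N$ and $0<\gamma\le\frac12$. Let $\mathcal M=\mathbb T^2$ or $\mathbb R^2$ and let $\nu_N:\mathcal M\to\mathbb R$ satisfy $|\nu_N(x)|\lesssim_AN^2\langle Nx\rangle^{-A}$ for all $x\in\mathcal M$ and every finite $A\ge1$. Let $0<t\le1$ and define $H_{t,\gamma}(x)=|t-|x||^{-\gamma}$ and $\widetilde H_{t,\gamma}(x)=|t^2-|x|^2|^{-\gamma}$ for $x\in\mathcal M\setminus\mathbb S^1(t)$, and set $H_{N,t,\gamma}=H_{t,\gamma}*\nu_N$ and $\widetilde H_{N,t,\gamma}=\widetilde H_{t,\gamma}*\nu_N$. Then $$|H_{N,t,\gamma}(x)|\lesssim\min\{N^\gamma,|t-|x||^{-\gamma}\}\,\big\langle\log\big(\min\{N,|t-|x||^{-1}\}\big)\big\rangle,$$ $$|\widetilde H_{N,t,\gamma}(x)|\lesssim\min\{N^{2\gamma},|t^2-|x|^2|^{-\gamma}\}\,\big\langle\log\big(\min\{N,|t-|x||^{-1}\}\big)\big\rangle$$ for any $x\in\mathcal M\cap B(0,10)$, with implicit constants independent of $N$.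
   Context: $\mathbb T^2=(\mathbb R/2\pi\mathbb Z)^2\cong[-\pi,\pi)^2$ (so $B(0,10)$ contains a copy of it); $|x|$ denotes the Euclidean norm on $\mathbb R^2$ or the distance to $0$ on $\mathbb T^2$. $\mathbb S^1(t)$ is the circle of radius $t$ centered at $0$. $\langle y\rangle=(1+|y|^2)^{1/2}$. Convolution is on $\mathcal M$ (normalizing constants irrelevant). *)

theory Defs
  imports "HOL-Analysis.Analysis"
begin

definition jbr :: "real \<Rightarrow> real" where
  "jbr y = sqrt (1 + y\<^sup>2)"

text \<open>The lattice 2\<pi>Z^2; the torus T^2 = R^2 / (2\<pi>Z)^2 is modelled by R^2 with
  2\<pi>-periodic functions; fundamental cell [-\<pi>,\<pi>)^2.\<close>
definition lattice2pi :: "(real^2) set" where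
  "lattice2pi = {v. \<forall>i. \<exists>k::int. v $ i = 2 * pi * of_int k}"

definition torus_cell :: "(real^2) set" where
  "torus_cell = {y. \<forall>i. - pi \<le> y $ i \<and> y $ i < pi}"

definition tnorm :: "real^2 \<Rightarrow> real" where
  "tnorm z = infdist z lattice2pi"

text \<open>Radial profiles: H_{t,\<gamma>} and tilde H_{t,\<gamma>} as functions of r = |x|
  (value on the circle r = t irrelevant: null set; set to 0).\<close>
definition Hprof :: "real \<Rightarrow> real \<Rightarrow> real \<Rightarrow> real" where
  "Hprof t \<gamma> r = (if r = t then 0 else \<bar>t - r\<bar> powr (- \<gamma>))"

definition Htprof :: "real \<Rightarrow> real \<Rightarrow> real \<Rightarrow> real" where
  "Htprof t \<gamma> r = (if r = t then 0 else \<bar>t\<^sup>2 - r\<^sup>2\<bar> powr (- \<gamma>))"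

text \<open>Right-hand sides of the bounds, with |t-|x||^{-1} = \<infinity> on the circle.\<close>
definition logfac :: "nat \<Rightarrow> real \<Rightarrow> real \<Rightarrow> real" where
  "logfac N t r = jbr (ln (if r = t then real N else min (real N) (1 / \<bar>t - r\<bar>)))"

definition bound1 :: "nat \<Rightarrow> real \<Rightarrow> real \<Rightarrow> real \<Rightarrow> real" where
  "bound1 N t \<gamma> r =
     (if r = t then real N powr \<gamma> else min (real N powr \<gamma>) (\<bar>t - r\<bar> powr (- \<gamma>)))
     * logfac N t r"

definition bound2 :: "nat \<Rightarrow> real \<Rightarrow> real \<Rightarrow> real \<Rightarrow> real" where
  "bound2 N t \<gamma> r =
     (if r = t then real N powr (2 * \<gamma>) else min (real N powr (2 * \<gamma>)) (\<bar>t\<^sup>2 - r\<^sup>2\<bar> powr (- \<gamma>)))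
     * logfac N t r"

definition convR2 :: "(real^2 \<Rightarrow> real) \<Rightarrow> (real^2 \<Rightarrow> real) \<Rightarrow> real^2 \<Rightarrow> real" where
  "convR2 f g x = (\<integral>y. f (x - y) * g y \<partial>lborel)"

definition convT2 :: "(real^2 \<Rightarrow> real) \<Rightarrow> (real^2 \<Rightarrow> real) \<Rightarrow> real^2 \<Rightarrow> real" where
  "convT2 f g x = (LINT y:torus_cell|lborel. f (x - y) * g y)"

end

theory Submission
  imports Defs
begin

(* Both kernels are singular of order gamma < 1 along the circle |z| = t, hence locally
   integrable, and the bounds hold even without the logarithmic factor.  A ball B(x,R) meets
   the layer {z. |t - |z|| <= s} in measure O(s R) (slice the plane by Fubini) and the layer
   {z. |t^2 - |z|^2| <= s} in measure O(s R / (|x| + R)); a dyadic layer-cake decomposition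
   turns this into  int_{B(x,R)} H <= K R^2 min(N^gamma, |t - |x||^-gamma)  for R >= 1/N, and
   similarly for the second kernel.  Splitting <N y>^-4 dyadically into indicators of the balls
   B(0, 2^k/N) then bounds the convolution with nu_N.  On the torus only the restriction of nu_N
   to the fundamental cell enters, and the torus distance is realised by one of the nine lattice
   points next to the cell, so the planar bound applies to each of nine translates. *)

section \<open>Lebesgue measure on the plane\<close>

lemma measurable_vector2 [measurable]:
  "(\<lambda>(a, b). vector [a, b] :: real^2) \<in> borel_measurable (lborel \<Otimes>\<^sub>M lborel)"
proof -
  have "continuous_on UNIV (\<lambda>p::real \<times> real. (\<chi> i. if i = 1 then fst p else snd p) :: real^2)"
  proof (intro continuous_on_vec_lambda)
    fix i :: 2
    show "continuous_on UNIV (\<lambda>p::real \<times> real. if i = 1 then fst p else snd p)"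
      by (cases "i = 1") (simp_all add: continuous_on_fst continuous_on_snd continuous_on_id)
  qed
  moreover have "(\<lambda>(a, b). vector [a, b] :: real^2) = (\<lambda>p. \<chi> i. if i = 1 then fst p else snd p)"
    by (auto simp: vec_eq_iff forall_2)
  ultimately show ?thesis
    unfolding lborel_prod by (simp add: borel_measurable_continuous_onI)
qed

lemma lborel_real2:
  "(lborel :: (real^2) measure) = distr (lborel \<Otimes>\<^sub>M lborel) borel (\<lambda>(a, b). vector [a, b])"
proof (rule lborel_eqI)
  fix l u :: "real^2"
  assume le_Basis: "\<And>b. b \<in> Basis \<Longrightarrow> l \<bullet> b \<le> u \<bullet> b"
  have le: "l$1 \<le> u$1" "l$2 \<le> u$2"
    using le_Basis[of "axis 1 1"] le_Basis[of "axis 2 1"] by (simp_all add: inner_axis)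
  have "(\<lambda>(a, b). vector [a, b] :: real^2) -` box l u \<inter> space (lborel \<Otimes>\<^sub>M lborel)
      = {l$1<..<u$1} \<times> {l$2<..<u$2}"
    by (auto simp: mem_box_cart forall_2 space_pair_measure)
  moreover have "(\<Prod>b\<in>Basis. (u - l) \<bullet> b) = (u$1 - l$1) * (u$2 - l$2)"
    by (simp add: Basis_vec_def UNIV_2 axis_eq_axis inner_axis prod.UNION_disjoint)
  ultimately show "emeasure (distr (lborel \<Otimes>\<^sub>M lborel) borel (\<lambda>(a, b). vector [a, b])) (box l u)
      = (\<Prod>b\<in>Basis. (u - l) \<bullet> b)"
    using le by (simp add: emeasure_distr lborel.emeasure_pair_measure_Times ennreal_mult)
qed simp

lemma emeasure_real2_le_rows:
  fixes T :: "(real^2) set"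
  assumes T: "T \<in> sets borel" and strip: "\<And>z. z \<in> T \<Longrightarrow> \<bar>z$1 - x\<bar> < R"
    and rows: "\<And>a. emeasure lborel {b. vector [a, b] \<in> T} \<le> ennreal c"
    and "0 \<le> R" "0 \<le> c"
  shows "emeasure lborel T \<le> ennreal (2 * R * c)"
proof -
  have "emeasure lborel T = emeasure (lborel \<Otimes>\<^sub>M lborel) ((\<lambda>(a, b). vector [a, b]) -` T)"
    using emeasure_distr[OF measurable_vector2 T]
    by (simp add: lborel_real2[symmetric] space_pair_measure)
  also have "\<dots> = (\<integral>\<^sup>+a. emeasure lborel {b. vector [a, b] \<in> T} \<partial>lborel)"
    using measurable_sets[OF measurable_vector2 T]
    by (subst lborel.emeasure_pair_measure_alt) (simp_all add: space_pair_measure vimage_def)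
  also have "\<dots> \<le> (\<integral>\<^sup>+a. ennreal c * indicator {x - R<..<x + R} a \<partial>lborel)"
  proof (rule nn_integral_mono)
    fix a
    have "{b. vector [a, b] \<in> T} = {}" if "a \<notin> {x - R<..<x + R}"
      using strip[of "vector [a, _]"] that by (auto simp: abs_diff_less_iff)
    then show "emeasure lborel {b. vector [a, b] \<in> T} \<le> ennreal c * indicator {x - R<..<x + R} a"
      using rows[of a] by (cases "a \<in> {x - R<..<x + R}") auto
  qed
  also have "\<dots> = ennreal (2 * R * c)"
    using assms by (simp add: nn_integral_cmult ennreal_mult'[symmetric] mult_ac)
  finally show ?thesis .
qed

lemma emeasure_real2_le_columns:
  fixes T :: "(real^2) set"
  assumes T: "T \<in> sets borel" and strip: "\<And>z. z \<in> T \<Longrightarrow> \<bar>z$2 - x\<bar> < R"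
    and columns: "\<And>b. emeasure lborel {a. vector [a, b] \<in> T} \<le> ennreal c"
    and "0 \<le> R" "0 \<le> c"
  shows "emeasure lborel T \<le> ennreal (2 * R * c)"
proof -
  have "emeasure lborel T = emeasure (lborel \<Otimes>\<^sub>M lborel) ((\<lambda>(a, b). vector [a, b]) -` T)"
    using emeasure_distr[OF measurable_vector2 T]
    by (simp add: lborel_real2[symmetric] space_pair_measure)
  also have "\<dots> = (\<integral>\<^sup>+b. emeasure lborel {a. vector [a, b] \<in> T} \<partial>lborel)"
    using measurable_sets[OF measurable_vector2 T]
    by (subst lborel_pair.emeasure_pair_measure_alt2) (simp_all add: space_pair_measure vimage_def)
  also have "\<dots> \<le> (\<integral>\<^sup>+b. ennreal c * indicator {x - R<..<x + R} b \<partial>lborel)"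
  proof (rule nn_integral_mono)
    fix b
    have "{a. vector [a, b] \<in> T} = {}" if "b \<notin> {x - R<..<x + R}"
      using strip[of "vector [_, b]"] that by (auto simp: abs_diff_less_iff)
    then show "emeasure lborel {a. vector [a, b] \<in> T} \<le> ennreal c * indicator {x - R<..<x + R} b"
      using columns[of b] by (cases "b \<in> {x - R<..<x + R}") auto
  qed
  also have "\<dots> = ennreal (2 * R * c)"
    using assms by (simp add: nn_integral_cmult ennreal_mult'[symmetric] mult_ac)
  finally show ?thesis .
qed

lemma norm_vector2: "norm (vector [a, b] :: real^2) = sqrt (a\<^sup>2 + b\<^sup>2)"
  by (simp add: norm_vec_def L2_set_def sum_2)

lemma emeasure_ball_real2: "0 \<le> R \<Longrightarrow> emeasure lborel (ball (x::real^2) R) = ennreal (pi * R\<^sup>2)"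
  by (simp add: emeasure_ball unit_ball_vol_2)

section \<open>Thin layers around a circle\<close>

lemma abs_diff_le_sqrt_sum_squares_diff:
  fixes a b c :: real
  assumes "\<bar>a\<bar> \<le> \<bar>b\<bar>" "\<bar>b\<bar> \<le> \<bar>c\<bar>"
  shows "\<bar>c\<bar> - \<bar>b\<bar> \<le> 2 * (sqrt (a\<^sup>2 + c\<^sup>2) - sqrt (a\<^sup>2 + b\<^sup>2))"
proof -
  define B C where "B = sqrt (a\<^sup>2 + b\<^sup>2)" and "C = sqrt (a\<^sup>2 + c\<^sup>2)"
  have squares: "a\<^sup>2 \<le> b\<^sup>2" "b\<^sup>2 \<le> c\<^sup>2"
    using assms by (simp_all add: abs_le_square_iff)
  then have "a\<^sup>2 + b\<^sup>2 \<le> (2 * \<bar>b\<bar>)\<^sup>2" "a\<^sup>2 + c\<^sup>2 \<le> (2 * \<bar>c\<bar>)\<^sup>2"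
    by (simp_all add: power_mult_distrib) (use zero_le_power2[of b] zero_le_power2[of c] in linarith)+
  then have "C + B \<le> 2 * (\<bar>c\<bar> + \<bar>b\<bar>)"
    unfolding B_def C_def by (simp add: add_mono real_le_lsqrt)
  moreover have "0 \<le> C - B"
    using squares by (simp add: B_def C_def)
  ultimately have "(C - B) * (C + B) \<le> (C - B) * (2 * (\<bar>c\<bar> + \<bar>b\<bar>))"
    by (rule mult_left_mono)
  moreover have "(C - B) * (C + B) = (\<bar>c\<bar> - \<bar>b\<bar>) * (\<bar>c\<bar> + \<bar>b\<bar>)"
  proof -
    have "(C - B) * (C + B) = C\<^sup>2 - B\<^sup>2"
      by (simp add: algebra_simps power2_eq_square)
    also have "\<dots> = \<bar>c\<bar>\<^sup>2 - \<bar>b\<bar>\<^sup>2"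
      by (simp add: B_def C_def)
    also have "\<dots> = (\<bar>c\<bar> - \<bar>b\<bar>) * (\<bar>c\<bar> + \<bar>b\<bar>)"
      by (simp add: algebra_simps power2_eq_square)
    finally show ?thesis .
  qed
  ultimately have product: "(\<bar>c\<bar> - \<bar>b\<bar>) * (\<bar>c\<bar> + \<bar>b\<bar>) \<le> (2 * (C - B)) * (\<bar>c\<bar> + \<bar>b\<bar>)"
    by (simp add: algebra_simps)
  show ?thesis
  proof (cases "\<bar>c\<bar> + \<bar>b\<bar> = 0")
    case False
    then have "0 < \<bar>c\<bar> + \<bar>b\<bar>"
      using abs_ge_zero[of c] abs_ge_zero[of b] by linarith
    with product show ?thesis
      unfolding B_def C_def by (rule mult_right_le_imp_le)
  qed (simp add: add_nonneg_eq_0_iff)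
qed

lemma emeasure_circle_layer_slice_le:
  fixes a t s :: real
  shows "emeasure lborel {b. \<bar>a\<bar> \<le> \<bar>b\<bar> \<and> \<bar>t - sqrt (a\<^sup>2 + b\<^sup>2)\<bar> \<le> s} \<le> ennreal (16 * s)"
proof (cases "{b. \<bar>a\<bar> \<le> \<bar>b\<bar> \<and> \<bar>t - sqrt (a\<^sup>2 + b\<^sup>2)\<bar> \<le> s} = {}")
  case False
  define E where "E = {b. \<bar>a\<bar> \<le> \<bar>b\<bar> \<and> \<bar>t - sqrt (a\<^sup>2 + b\<^sup>2)\<bar> \<le> s}"
  obtain b0 where b0: "b0 \<in> E"
    using False by (auto simp: E_def)
  have close: "\<bar>c\<bar> - \<bar>b\<bar> \<le> 4 * s" if "b \<in> E" "c \<in> E" "\<bar>b\<bar> \<le> \<bar>c\<bar>" for b c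
  proof -
    have "sqrt (a\<^sup>2 + c\<^sup>2) - sqrt (a\<^sup>2 + b\<^sup>2) \<le> 2 * s"
      using that by (auto simp: E_def abs_le_iff)
    then show ?thesis
      using abs_diff_le_sqrt_sum_squares_diff[of a b c] that by (auto simp: E_def)
  qed
  have "E \<subseteq> {\<bar>b0\<bar> - 4 * s..\<bar>b0\<bar> + 4 * s} \<union> {- \<bar>b0\<bar> - 4 * s..- \<bar>b0\<bar> + 4 * s}"
  proof
    fix b
    assume "b \<in> E"
    then have "\<bar>\<bar>b\<bar> - \<bar>b0\<bar>\<bar> \<le> 4 * s"
      using close[of b b0] close[of b0 b] b0 by (cases "\<bar>b\<bar> \<le> \<bar>b0\<bar>") auto
    then show "b \<in> {\<bar>b0\<bar> - 4 * s..\<bar>b0\<bar> + 4 * s} \<union> {- \<bar>b0\<bar> - 4 * s..- \<bar>b0\<bar> + 4 * s}"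
      by (cases "0 \<le> b") auto
  qed
  then have "emeasure lborel E
      \<le> emeasure lborel ({\<bar>b0\<bar> - 4 * s..\<bar>b0\<bar> + 4 * s} \<union> {- \<bar>b0\<bar> - 4 * s..- \<bar>b0\<bar> + 4 * s})"
    by (intro emeasure_mono) auto
  also have "\<dots> \<le> emeasure lborel {\<bar>b0\<bar> - 4 * s..\<bar>b0\<bar> + 4 * s}
      + emeasure lborel {- \<bar>b0\<bar> - 4 * s..- \<bar>b0\<bar> + 4 * s}"
    by (rule emeasure_subadditive) auto
  also have "\<dots> = ennreal (16 * s)"
    using b0 by (auto simp: E_def ennreal_plus[symmetric] simp del: ennreal_plus)
  finally show ?thesis
    unfolding E_def .
next
  case True
  show ?thesis
    unfolding True by simp
qed

lemma emeasure_ball_circle_layer_le: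
  fixes x :: "real^2"
  assumes "0 \<le> s" "0 \<le> R"
  shows "emeasure lborel (ball x R \<inter> {z. \<bar>t - norm z\<bar> \<le> s}) \<le> ennreal (64 * s * R)"
proof -
  define S where "S = ball x R \<inter> {z. \<bar>t - norm z\<bar> \<le> s}"
  have S [measurable]: "S \<in> sets borel"
    unfolding S_def by measurable
  have coordinate: "\<bar>z$i - x$i\<bar> < R" if "z \<in> S" for z i
    using component_le_norm_cart[of "z - x" i] that by (simp add: S_def dist_norm norm_minus_commute)
  have rows: "emeasure lborel (S \<inter> {z. \<bar>z$1\<bar> \<le> \<bar>z$2\<bar>}) \<le> ennreal (2 * R * (16 * s))"
  proof (rule emeasure_real2_le_rows)
    show "emeasure lborel {b. vector [a, b] \<in> S \<inter> {z. \<bar>z$1\<bar> \<le> \<bar>z$2\<bar>}} \<le> ennreal (16 * s)" for a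
    proof (rule order_trans[OF emeasure_mono emeasure_circle_layer_slice_le])
      show "{b. vector [a, b] \<in> S \<inter> {z. \<bar>z$1\<bar> \<le> \<bar>z$2\<bar>}}
          \<subseteq> {b. \<bar>a\<bar> \<le> \<bar>b\<bar> \<and> \<bar>t - sqrt (a\<^sup>2 + b\<^sup>2)\<bar> \<le> s}"
        by (auto simp: S_def norm_vector2)
    qed measurable
  qed (use coordinate assms in auto)
  have columns: "emeasure lborel (S \<inter> {z. \<bar>z$2\<bar> \<le> \<bar>z$1\<bar>}) \<le> ennreal (2 * R * (16 * s))"
  proof (rule emeasure_real2_le_columns)
    show "emeasure lborel {a. vector [a, b] \<in> S \<inter> {z. \<bar>z$2\<bar> \<le> \<bar>z$1\<bar>}} \<le> ennreal (16 * s)" for b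
    proof (rule order_trans[OF emeasure_mono emeasure_circle_layer_slice_le])
      show "{a. vector [a, b] \<in> S \<inter> {z. \<bar>z$2\<bar> \<le> \<bar>z$1\<bar>}}
          \<subseteq> {a. \<bar>b\<bar> \<le> \<bar>a\<bar> \<and> \<bar>t - sqrt (b\<^sup>2 + a\<^sup>2)\<bar> \<le> s}"
        by (auto simp: S_def norm_vector2 add.commute)
    qed measurable
  qed (use coordinate assms in auto)
  have "emeasure lborel S
      \<le> emeasure lborel (S \<inter> {z. \<bar>z$1\<bar> \<le> \<bar>z$2\<bar>}) + emeasure lborel (S \<inter> {z. \<bar>z$2\<bar> \<le> \<bar>z$1\<bar>})"
    by (rule order_trans[OF emeasure_mono emeasure_subadditive]) auto
  also have "\<dots> \<le> ennreal (2 * R * (16 * s)) + ennreal (2 * R * (16 * s))"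
    by (rule add_mono[OF rows columns])
  also have "\<dots> = ennreal (64 * s * R)"
    using assms by (simp flip: ennreal_plus)
  finally show ?thesis
    unfolding S_def .
qed

lemma emeasure_square_circle_layer_le:
  fixes t s :: real
  assumes "0 \<le> s"
  shows "emeasure lborel {z::real^2. \<bar>t\<^sup>2 - (norm z)\<^sup>2\<bar> \<le> s} \<le> ennreal (2 * pi * s)"
proof -
  define \<rho> \<rho>0 where "\<rho> = sqrt (t\<^sup>2 + s)" and "\<rho>0 = sqrt (max 0 (t\<^sup>2 - s))"
  have "{z::real^2. \<bar>t\<^sup>2 - (norm z)\<^sup>2\<bar> \<le> s} \<subseteq> cball 0 \<rho> - ball 0 \<rho>0"
  proof
    fix z :: "real^2"
    assume "z \<in> {z. \<bar>t\<^sup>2 - (norm z)\<^sup>2\<bar> \<le> s}"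
    then have "(norm z)\<^sup>2 \<le> t\<^sup>2 + s" "max 0 (t\<^sup>2 - s) \<le> (norm z)\<^sup>2"
      by auto
    then have "norm z \<le> \<rho>" "\<rho>0 \<le> norm z"
      unfolding \<rho>_def \<rho>0_def by (auto intro: real_le_rsqrt real_le_lsqrt)
    then show "z \<in> cball 0 \<rho> - ball 0 \<rho>0"
      by simp
  qed
  then have "emeasure lborel {z::real^2. \<bar>t\<^sup>2 - (norm z)\<^sup>2\<bar> \<le> s}
      \<le> emeasure lborel (cball (0::real^2) \<rho> - ball 0 \<rho>0)"
    by (intro emeasure_mono) auto
  also have "\<dots> = emeasure lborel (cball (0::real^2) \<rho>) - emeasure lborel (ball (0::real^2) \<rho>0)"
  proof (rule emeasure_Diff)
    have "\<rho>0 \<le> \<rho>"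
      using assms unfolding \<rho>_def \<rho>0_def by (auto simp: max_def intro: add_nonneg_nonneg)
    then show "ball 0 \<rho>0 \<subseteq> cball (0::real^2) \<rho>"
      by auto
  qed (use emeasure_lborel_ball_finite[of 0 \<rho>0] in \<open>auto simp: less_top\<close>)
  also have "\<dots> = ennreal (pi * (t\<^sup>2 + s)) - ennreal (pi * max 0 (t\<^sup>2 - s))"
    using assms by (simp add: emeasure_ball emeasure_cball unit_ball_vol_2 \<rho>_def \<rho>0_def)
  also have "\<dots> \<le> ennreal (2 * pi * s)"
    using assms by (subst ennreal_minus) (auto intro!: ennreal_leI simp: algebra_simps max_def)
  finally show ?thesis .
qed

lemma abs_diff_squares: "0 \<le> a \<Longrightarrow> 0 \<le> b \<Longrightarrow> \<bar>a\<^sup>2 - b\<^sup>2\<bar> = \<bar>a - b\<bar> * (a + b :: real)"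
proof -
  assume "0 \<le> a" "0 \<le> b"
  have "a\<^sup>2 - b\<^sup>2 = (a - b) * (a + b)"
    by (simp add: power2_eq_square algebra_simps)
  then show ?thesis
    using \<open>0 \<le> a\<close> \<open>0 \<le> b\<close> by (simp add: abs_mult)
qed

lemma abs_sub_norm_mult_le_square_layer:
  fixes x z :: "'a::real_normed_vector"
  assumes t: "0 < t" and R: "2 * R \<le> norm x" and z: "z \<in> ball x R"
  shows "\<bar>t - norm z\<bar> * (t + norm x) \<le> 2 * \<bar>t\<^sup>2 - (norm z)\<^sup>2\<bar>"
proof -
  have "norm x - norm z < R"
    using norm_triangle_ineq3[of x z] z by (simp add: dist_norm abs_le_iff)
  then have "t + norm x \<le> 2 * (t + norm z)"
    using R t by (simp add: algebra_simps)
  then have "\<bar>t - norm z\<bar> * (t + norm x) \<le> \<bar>t - norm z\<bar> * (2 * (t + norm z))"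
    by (rule mult_left_mono) simp
  also have "\<dots> = 2 * \<bar>t\<^sup>2 - (norm z)\<^sup>2\<bar>"
    using t by (simp add: abs_diff_squares)
  finally show ?thesis .
qed

lemma emeasure_ball_square_circle_layer_le:
  fixes x :: "real^2"
  assumes t: "0 < t" and R: "0 < R" and s: "0 \<le> s"
  shows "emeasure lborel (ball x R \<inter> {z. \<bar>t\<^sup>2 - (norm z)\<^sup>2\<bar> \<le> s}) \<le> ennreal (320 * R * s / (2 * norm x + R))"
proof (cases "2 * R \<le> norm x")
  case True
  have tx: "0 < t + norm x"
    using t by (simp add: add_pos_nonneg)
  have "ball x R \<inter> {z. \<bar>t\<^sup>2 - (norm z)\<^sup>2\<bar> \<le> s} \<subseteq> ball x R \<inter> {z. \<bar>t - norm z\<bar> \<le> 2 * s / (t + norm x)}"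
    using order_trans[OF abs_sub_norm_mult_le_square_layer[OF t True]] tx by (auto simp: pos_le_divide_eq)
  then have "emeasure lborel (ball x R \<inter> {z. \<bar>t\<^sup>2 - (norm z)\<^sup>2\<bar> \<le> s})
      \<le> emeasure lborel (ball x R \<inter> {z. \<bar>t - norm z\<bar> \<le> 2 * s / (t + norm x)})"
    by (intro emeasure_mono) auto
  also have "\<dots> \<le> ennreal (64 * (2 * s / (t + norm x)) * R)"
    using s tx R by (intro emeasure_ball_circle_layer_le) auto
  also have "\<dots> \<le> ennreal (320 * R * s / (2 * norm x + R))"
  proof (rule ennreal_leI)
    have "128 * (2 * norm x + R) \<le> 320 * (t + norm x)"
      using True t by (simp add: algebra_simps)
    then have "128 / (t + norm x) \<le> 320 / (2 * norm x + R)"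
      using tx R by (simp add: pos_divide_le_eq pos_le_divide_eq add_nonneg_pos)
    then have "R * s * (128 / (t + norm x)) \<le> R * s * (320 / (2 * norm x + R))"
      using R s by (intro mult_left_mono) auto
    then show "64 * (2 * s / (t + norm x)) * R \<le> 320 * R * s / (2 * norm x + R)"
      by (simp add: mult_ac)
  qed
  finally show ?thesis .
next
  case False
  have "emeasure lborel (ball x R \<inter> {z. \<bar>t\<^sup>2 - (norm z)\<^sup>2\<bar> \<le> s})
      \<le> emeasure lborel {z::real^2. \<bar>t\<^sup>2 - (norm z)\<^sup>2\<bar> \<le> s}"
    by (intro emeasure_mono) auto
  also have "\<dots> \<le> ennreal (2 * pi * s)"
    using s by (rule emeasure_square_circle_layer_le)
  also have "\<dots> \<le> ennreal (320 * R * s / (2 * norm x + R))"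
  proof (rule ennreal_leI)
    have "2 * norm x + R \<le> 5 * R"
      using False by (simp add: algebra_simps)
    then have "2 * pi * (2 * norm x + R) \<le> 8 * (5 * R)"
      using pi_less_4 R by (intro mult_mono add_nonneg_nonneg) auto
    then have "2 * pi \<le> 320 * R / (2 * norm x + R)"
      using R by (simp add: pos_le_divide_eq add_nonneg_pos)
    then show "2 * pi * s \<le> 320 * R * s / (2 * norm x + R)"
      using s by (metis mult.commute mult_right_mono times_divide_eq_left)
  qed
  finally show ?thesis .
qed

lemma square_layer_oscillation_le:
  fixes x z :: "'a::real_normed_vector"
  assumes "dist z x \<le> R"
  shows "\<bar>\<bar>t\<^sup>2 - (norm z)\<^sup>2\<bar> - \<bar>t\<^sup>2 - (norm x)\<^sup>2\<bar>\<bar> \<le> R * (2 * norm x + R)"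
proof -
  have close: "\<bar>norm z - norm x\<bar> \<le> R"
    using norm_triangle_ineq3[of z x] assms by (simp add: dist_norm)
  then have "norm z + norm x \<le> 2 * norm x + R"
    by (simp add: abs_le_iff algebra_simps)
  with close have "\<bar>norm z - norm x\<bar> * (norm z + norm x) \<le> R * (2 * norm x + R)"
    by (intro mult_mono) auto
  moreover have "\<bar>\<bar>t\<^sup>2 - (norm z)\<^sup>2\<bar> - \<bar>t\<^sup>2 - (norm x)\<^sup>2\<bar>\<bar> \<le> \<bar>(norm z)\<^sup>2 - (norm x)\<^sup>2\<bar>"
    using abs_triangle_ineq3[of "t\<^sup>2 - (norm z)\<^sup>2" "t\<^sup>2 - (norm x)\<^sup>2"] by simp
  ultimately show ?thesis
    by (simp add: abs_diff_squares)
qed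

section \<open>A dyadic layer-cake estimate\<close>

lemma ennreal_le_suminf: "(f::nat \<Rightarrow> ennreal) n \<le> suminf f"
  using sum_le_suminf[of f "{n}"] by (simp add: summableI)

lemma real_dyadic_interval:
  fixes u :: real
  assumes "1 \<le> u"
  shows "\<exists>n. 2 ^ n \<le> u \<and> u < 2 ^ Suc n"
proof -
  have "1 \<le> nat \<lfloor>u\<rfloor>"
    using assms by (simp add: le_nat_iff le_floor_iff)
  then obtain n where "2 ^ n \<le> nat \<lfloor>u\<rfloor>" "nat \<lfloor>u\<rfloor> < 2 ^ (n + 1)"
    using ex_power_ivl1[of 2 "nat \<lfloor>u\<rfloor>"] by auto
  then have "2 ^ n \<le> \<lfloor>u\<rfloor>" "\<lfloor>u\<rfloor> < 2 ^ Suc n"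
    using assms by (simp_all add: le_nat_iff nat_less_iff)
  then show ?thesis
    by (auto simp: le_floor_iff floor_less_iff)
qed

lemma powr_neg_antimono: "0 < a \<Longrightarrow> a \<le> b \<Longrightarrow> 0 \<le> \<gamma> \<Longrightarrow> (b::real) powr - \<gamma> \<le> a powr - \<gamma>"
  by (intro powr_mono2') auto

lemma powr_le_dyadic_sum:
  fixes u \<rho> :: real
  assumes u: "0 \<le> u" and \<rho>: "0 < \<rho>" and \<gamma>: "0 \<le> \<gamma>"
  shows "ennreal (u powr - \<gamma>)
    \<le> ennreal (\<rho> powr - \<gamma>) + (\<Sum>n. ennreal ((\<rho> / 2 ^ Suc n) powr - \<gamma>) * indicator {..\<rho> / 2 ^ n} u)"
proof (cases "0 < u \<and> u < \<rho>")
  case True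
  then obtain n where n: "2 ^ n \<le> \<rho> / u" "\<rho> / u < 2 ^ Suc n"
    using real_dyadic_interval[of "\<rho> / u"] by auto
  then have "u \<le> \<rho> / 2 ^ n" "\<rho> / 2 ^ Suc n \<le> u"
    using True by (auto simp: field_simps)
  then have "ennreal (u powr - \<gamma>) \<le> ennreal ((\<rho> / 2 ^ Suc n) powr - \<gamma>) * indicator {..\<rho> / 2 ^ n} u"
    using \<rho> \<gamma> by (auto intro!: ennreal_leI powr_neg_antimono)
  also have "\<dots> \<le> (\<Sum>n. ennreal ((\<rho> / 2 ^ Suc n) powr - \<gamma>) * indicator {..\<rho> / 2 ^ n} u)"
    by (rule ennreal_le_suminf)
  finally show ?thesis
    by (rule add_increasing[OF zero_le])
next
  case False
  then have "u powr - \<gamma> \<le> \<rho> powr - \<gamma>"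
    using u \<rho> \<gamma> by (cases "u = 0") (auto intro!: powr_neg_antimono)
  then show ?thesis
    by (intro add_increasing2[OF zero_le] ennreal_leI)
qed

definition layer_const :: "real \<Rightarrow> real" where
  "layer_const \<gamma> = 2 powr \<gamma> / (1 - 2 powr (\<gamma> - 1))"

lemma layer_const_pos: "0 < \<gamma> \<Longrightarrow> \<gamma> < 1 \<Longrightarrow> 0 < layer_const \<gamma>"
  by (simp add: layer_const_def powr_less_one)

lemma nn_integral_powr_le_layers:
  fixes g :: "'a \<Rightarrow> real"
  assumes B: "B \<in> sets M" and g: "g \<in> borel_measurable M" "\<And>z. 0 \<le> g z"
    and measure_B: "emeasure M B \<le> ennreal m"
    and layers: "\<And>s. 0 < s \<Longrightarrow> emeasure M (B \<inter> {z. g z \<le> s}) \<le> ennreal (c * s)"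
    and m: "0 \<le> m" and c: "0 \<le> c" and \<rho>: "0 < \<rho>" and \<gamma>: "0 < \<gamma>" "\<gamma> < 1"
  shows "(\<integral>\<^sup>+z. ennreal (g z powr - \<gamma>) * indicator B z \<partial>M)
    \<le> ennreal (m * \<rho> powr - \<gamma> + layer_const \<gamma> * c * \<rho> powr (1 - \<gamma>))"
proof -
  define layer where "layer n = B \<inter> {z. g z \<le> \<rho> / 2 ^ n}" for n :: nat
  define a where "a n = (\<rho> / 2 ^ Suc n) powr - \<gamma>" for n :: nat
  define r where "r = (2::real) powr (\<gamma> - 1)"
  have r: "0 \<le> r" "r < 1"
    using \<gamma> by (auto simp: r_def powr_less_one)
  have layer_sets: "layer n \<in> sets M" for n
  proof -
    have "layer n = {z \<in> space M. g z \<le> \<rho> / 2 ^ n} \<inter> B"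
      using sets.sets_into_space[OF B] by (auto simp: layer_def)
    then show ?thesis
      using B g(1) by simp
  qed
  have pointwise: "ennreal (g z powr - \<gamma>) * indicator B z
      \<le> ennreal (\<rho> powr - \<gamma>) * indicator B z + (\<Sum>n. ennreal (a n) * indicator (layer n) z)" for z
    using powr_le_dyadic_sum[OF g(2)[of z] \<rho>, of \<gamma>] \<gamma>
    by (cases "z \<in> B") (simp_all add: a_def layer_def indicator_def)
  have layer_term: "ennreal (a n) * emeasure M (layer n) \<le> ennreal (2 powr \<gamma> * c * \<rho> powr (1 - \<gamma>) * r ^ n)"
    for n
  proof -
    have "ennreal (a n) * emeasure M (layer n) \<le> ennreal (a n) * ennreal (c * (\<rho> / 2 ^ n))"
      unfolding layer_def using \<rho> by (intro mult_left_mono layers) auto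
    also have "\<dots> = ennreal (a n * (c * (\<rho> / 2 ^ n)))"
      using c \<rho> by (intro ennreal_mult[symmetric]) (auto simp: a_def)
    also have "a n * (c * (\<rho> / 2 ^ n)) = 2 powr \<gamma> * c * \<rho> powr (1 - \<gamma>) * r ^ n"
      using \<rho> by (simp add: a_def r_def powr_divide powr_diff powr_minus powr_realpow[symmetric]
          powr_powr powr_add powr_mult field_simps flip: powr_power)
    finally show ?thesis .
  qed
  have "(\<integral>\<^sup>+z. ennreal (g z powr - \<gamma>) * indicator B z \<partial>M)
      \<le> (\<integral>\<^sup>+z. ennreal (\<rho> powr - \<gamma>) * indicator B z + (\<Sum>n. ennreal (a n) * indicator (layer n) z) \<partial>M)"
    by (rule nn_integral_mono) (rule pointwise)
  also have "\<dots> = ennreal (\<rho> powr - \<gamma>) * emeasure M B + (\<Sum>n. ennreal (a n) * emeasure M (layer n))"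
    using B layer_sets
    by (simp add: nn_integral_add nn_integral_suminf nn_integral_cmult_indicator)
  also have "\<dots> \<le> ennreal (\<rho> powr - \<gamma>) * ennreal m + (\<Sum>n. ennreal (2 powr \<gamma> * c * \<rho> powr (1 - \<gamma>) * r ^ n))"
    by (intro add_mono mult_left_mono measure_B suminf_le layer_term) (auto intro: summableI)
  also have "(\<Sum>n. ennreal (2 powr \<gamma> * c * \<rho> powr (1 - \<gamma>) * r ^ n))
      = ennreal (2 powr \<gamma> * c * \<rho> powr (1 - \<gamma>) / (1 - r))"
    using r c by (subst suminf_ennreal2)
      (auto simp: suminf_mult suminf_geometric summable_geometric divide_inverse)
  also have "ennreal (\<rho> powr - \<gamma>) * ennreal m + \<dots>
      = ennreal (m * \<rho> powr - \<gamma> + layer_const \<gamma> * c * \<rho> powr (1 - \<gamma>))"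
    using r c m by (simp add: layer_const_def r_def ennreal_mult'[symmetric] flip: ennreal_plus)
  finally show ?thesis .
qed

lemma nn_integral_powr_le_oscillation:
  fixes g :: "'a \<Rightarrow> real"
  assumes B: "B \<in> sets M" and g: "g \<in> borel_measurable M" "\<And>z. 0 \<le> g z"
    and measure_B: "emeasure M B \<le> ennreal m"
    and layers: "\<And>s. 0 < s \<Longrightarrow> emeasure M (B \<inter> {z. g z \<le> s}) \<le> ennreal (c * s)"
    and oscillation: "\<And>z. z \<in> B \<Longrightarrow> \<bar>g z - a\<bar> \<le> L"
    and m: "0 \<le> m" and c: "0 \<le> c" and a: "0 \<le> a" and L: "0 < L" and \<gamma>: "0 < \<gamma>" "\<gamma> < 1"
  shows "(\<integral>\<^sup>+z. ennreal (g z powr - \<gamma>) * indicator B z \<partial>M)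
    \<le> ennreal (2 powr \<gamma> * (m + layer_const \<gamma> * c * L) * max L a powr - \<gamma>)"
proof -
  define h where "h = 2 powr \<gamma> * max L a powr - \<gamma>"
  have h: "(max L a / 2) powr - \<gamma> = h"
    using L by (simp add: h_def powr_divide powr_minus_divide)
  have Q: "0 \<le> layer_const \<gamma> * c * L"
    using layer_const_pos[OF \<gamma>] c L by simp
  show ?thesis
  proof (cases "2 * L \<le> a")
    case True
    have "g z powr - \<gamma> \<le> h" if "z \<in> B" for z
      unfolding h[symmetric] using oscillation[OF that] True L \<gamma>
      by (intro powr_neg_antimono) (auto simp: abs_le_iff)
    then have "(\<integral>\<^sup>+z. ennreal (g z powr - \<gamma>) * indicator B z \<partial>M) \<le> (\<integral>\<^sup>+z. ennreal h * indicator B z \<partial>M)"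
      by (intro nn_integral_mono) (auto simp: indicator_def intro: ennreal_leI)
    also have "\<dots> \<le> ennreal h * ennreal m"
      using B measure_B by (simp add: nn_integral_cmult_indicator mult_left_mono)
    also have "\<dots> = ennreal (h * m)"
      using m by (simp add: ennreal_mult'')
    also have "\<dots> \<le> ennreal (h * (m + layer_const \<gamma> * c * L))"
      using Q by (intro ennreal_leI mult_left_mono) (auto simp: h_def)
    finally show ?thesis
      by (simp only: h_def mult_ac)
  next
    case False
    have "m * L powr - \<gamma> + layer_const \<gamma> * c * L powr (1 - \<gamma>) = (m + layer_const \<gamma> * c * L) * L powr - \<gamma>"
      using L by (simp add: powr_diff powr_minus field_simps)
    also have "\<dots> \<le> (m + layer_const \<gamma> * c * L) * h"
      unfolding h[symmetric] using False L \<gamma> m Q by (intro mult_left_mono powr_neg_antimono) auto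
    also have "\<dots> = 2 powr \<gamma> * (m + layer_const \<gamma> * c * L) * max L a powr - \<gamma>"
      by (simp add: h_def mult_ac)
    finally show ?thesis
      using nn_integral_powr_le_layers[OF B g measure_B layers m c L \<gamma>] by (meson ennreal_leI order_trans)
  qed
qed

section \<open>Integrals of the two profiles over balls\<close>

text \<open>\<open>min c (d powr - \<gamma>)\<close> with \<open>0 powr - \<gamma>\<close> read as \<open>\<infinity>\<close> (Isabelle's \<open>powr\<close> gives \<open>0\<close>
  there); with \<open>c = N powr \<gamma>\<close> and \<open>d = \<bar>t - norm x\<bar>\<close> it is the factor
  \<open>min {N^\<gamma>, |t - |x||^-\<gamma>}\<close> of the first bound.\<close>
definition capped_powr :: "real \<Rightarrow> real \<Rightarrow> real \<Rightarrow> real" where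
  "capped_powr c \<gamma> d = (if d = 0 then c else min c (d powr - \<gamma>))"

lemma capped_powr_nonneg: "0 \<le> c \<Longrightarrow> 0 \<le> capped_powr c \<gamma> d"
  by (simp add: capped_powr_def)

lemma max_powr_le_capped_powr:
  assumes "0 < L" "L powr - \<gamma> \<le> c" "0 \<le> d" "0 \<le> \<gamma>"
  shows "max L d powr - \<gamma> \<le> capped_powr c \<gamma> d"
proof -
  have "max L d powr - \<gamma> \<le> L powr - \<gamma>"
    using assms by (intro powr_neg_antimono) auto
  moreover have "max L d powr - \<gamma> \<le> d powr - \<gamma>" if "d \<noteq> 0"
    using assms that by (intro powr_neg_antimono) auto
  ultimately show ?thesis
    using assms(2) by (auto simp: capped_powr_def)
qed

lemma powr_neg_le_of_inverse_le:
  fixes N R :: real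
  assumes "0 < N" "1 / N \<le> R" "0 \<le> \<gamma>"
  shows "R powr - \<gamma> \<le> N powr \<gamma>"
proof -
  have "R powr - \<gamma> \<le> (1 / N) powr - \<gamma>"
    using assms by (intro powr_neg_antimono) auto
  also have "\<dots> = N powr \<gamma>"
    using assms by (simp add: powr_divide powr_minus_divide)
  finally show ?thesis .
qed

lemma Hprof_eq: "Hprof t \<gamma> r = \<bar>t - r\<bar> powr - \<gamma>"
  by (simp add: Hprof_def)

lemma Htprof_eq: "Htprof t \<gamma> r = \<bar>t\<^sup>2 - r\<^sup>2\<bar> powr - \<gamma>"
  by (simp add: Htprof_def)

lemma Hprof_nonneg: "0 \<le> Hprof t \<gamma> r"
  by (simp add: Hprof_def)

lemma Htprof_nonneg: "0 \<le> Htprof t \<gamma> r"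
  by (simp add: Htprof_def)

lemma Hprof_measurable [measurable]: "Hprof t \<gamma> \<in> borel_measurable borel"
  unfolding Hprof_def by measurable

lemma Htprof_measurable [measurable]: "Htprof t \<gamma> \<in> borel_measurable borel"
  unfolding Htprof_def by measurable

text \<open>For both profiles the layer growth rate times the oscillation on \<open>ball x R\<close> is at most
  \<open>320 * R\<^sup>2\<close>.\<close>
definition ball_const :: "real \<Rightarrow> real" where
  "ball_const \<gamma> = 2 powr \<gamma> * (pi + 320 * layer_const \<gamma>)"

lemma ball_const_pos: "0 < \<gamma> \<Longrightarrow> \<gamma> < 1 \<Longrightarrow> 0 < ball_const \<gamma>"
  using layer_const_pos[of \<gamma>] by (simp add: ball_const_def add_pos_pos)

lemma nn_integral_ball_Hprof_le:
  fixes x :: "real^2" and N :: real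
  assumes \<gamma>: "0 < \<gamma>" "\<gamma> < 1" and N: "0 < N" and R: "1 / N \<le> R"
  shows "(\<integral>\<^sup>+z. ennreal (Hprof t \<gamma> (norm z)) * indicator (ball x R) z \<partial>lborel)
    \<le> ennreal (ball_const \<gamma> * R\<^sup>2 * capped_powr (N powr \<gamma>) \<gamma> \<bar>t - norm x\<bar>)"
proof -
  have R0: "0 < R"
    using N R by (meson divide_pos_pos less_le_trans zero_less_one)
  have "(\<integral>\<^sup>+z. ennreal (Hprof t \<gamma> (norm z)) * indicator (ball x R) z \<partial>lborel)
      \<le> ennreal (2 powr \<gamma> * (pi * R\<^sup>2 + layer_const \<gamma> * (64 * R) * R) * max R \<bar>t - norm x\<bar> powr - \<gamma>)"
    unfolding Hprof_eq
  proof (rule nn_integral_powr_le_oscillation)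
    show "emeasure lborel (ball x R) \<le> ennreal (pi * R\<^sup>2)"
      using R0 by (simp add: emeasure_ball_real2)
    show "emeasure lborel (ball x R \<inter> {z. \<bar>t - norm z\<bar> \<le> s}) \<le> ennreal (64 * R * s)" if "0 < s" for s
      using emeasure_ball_circle_layer_le[of s R x t] that R0 by (simp add: mult_ac)
    show "\<bar>\<bar>t - norm z\<bar> - \<bar>t - norm x\<bar>\<bar> \<le> R" if "z \<in> ball x R" for z
      using that norm_triangle_ineq3[of z x] by (simp add: dist_norm norm_minus_commute abs_le_iff) argo
  qed (use R0 \<gamma> in auto)
  also have "\<dots> \<le> ennreal (ball_const \<gamma> * R\<^sup>2 * capped_powr (N powr \<gamma>) \<gamma> \<bar>t - norm x\<bar>)"
  proof (rule ennreal_leI, rule mult_mono)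
    show "2 powr \<gamma> * (pi * R\<^sup>2 + layer_const \<gamma> * (64 * R) * R) \<le> ball_const \<gamma> * R\<^sup>2"
      using layer_const_pos[OF \<gamma>] R0 by (simp add: ball_const_def power2_eq_square algebra_simps)
    show "max R \<bar>t - norm x\<bar> powr - \<gamma> \<le> capped_powr (N powr \<gamma>) \<gamma> \<bar>t - norm x\<bar>"
      using R0 powr_neg_le_of_inverse_le[OF N R] \<gamma> by (intro max_powr_le_capped_powr) auto
  qed (use layer_const_pos[OF \<gamma>] R0 in \<open>auto simp: ball_const_def\<close>)
  finally show ?thesis .
qed

lemma nn_integral_ball_Htprof_le:
  fixes x :: "real^2" and N :: real
  assumes \<gamma>: "0 < \<gamma>" "\<gamma> < 1" and N: "0 < N" and R: "1 / N \<le> R" and t: "0 < t"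
  shows "(\<integral>\<^sup>+z. ennreal (Htprof t \<gamma> (norm z)) * indicator (ball x R) z \<partial>lborel)
    \<le> ennreal (ball_const \<gamma> * R\<^sup>2 * capped_powr (N powr (2 * \<gamma>)) \<gamma> \<bar>t\<^sup>2 - (norm x)\<^sup>2\<bar>)"
proof -
  define L where "L = R * (2 * norm x + R)"
  define c where "c = 320 * R / (2 * norm x + R)"
  have R0: "0 < R"
    using N R by (meson divide_pos_pos less_le_trans zero_less_one)
  have L: "R\<^sup>2 \<le> L"
    using R0 by (simp add: L_def power2_eq_square algebra_simps)
  have L0: "0 < L"
    using R0 by (intro less_le_trans[OF _ L]) simp
  have "0 < 2 * norm x + R"
    using R0 by (simp add: add_nonneg_pos)
  then have cL: "c * L = 320 * R\<^sup>2"
    by (simp add: c_def L_def power2_eq_square)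
  have "(\<integral>\<^sup>+z. ennreal (Htprof t \<gamma> (norm z)) * indicator (ball x R) z \<partial>lborel)
      \<le> ennreal (2 powr \<gamma> * (pi * R\<^sup>2 + layer_const \<gamma> * c * L) * max L \<bar>t\<^sup>2 - (norm x)\<^sup>2\<bar> powr - \<gamma>)"
    unfolding Htprof_eq
  proof (rule nn_integral_powr_le_oscillation)
    show "emeasure lborel (ball x R) \<le> ennreal (pi * R\<^sup>2)"
      using R0 by (simp add: emeasure_ball_real2)
    show "emeasure lborel (ball x R \<inter> {z. \<bar>t\<^sup>2 - (norm z)\<^sup>2\<bar> \<le> s}) \<le> ennreal (c * s)" if "0 < s" for s
      using emeasure_ball_square_circle_layer_le[OF t R0, of s x] that by (simp add: c_def)
    show "\<bar>\<bar>t\<^sup>2 - (norm z)\<^sup>2\<bar> - \<bar>t\<^sup>2 - (norm x)\<^sup>2\<bar>\<bar> \<le> L" if "z \<in> ball x R" for z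
      unfolding L_def using that by (intro square_layer_oscillation_le) (simp add: dist_commute)
  qed (use R0 L0 \<gamma> in \<open>auto simp: c_def\<close>)
  also have "\<dots> \<le> ennreal (ball_const \<gamma> * R\<^sup>2 * capped_powr (N powr (2 * \<gamma>)) \<gamma> \<bar>t\<^sup>2 - (norm x)\<^sup>2\<bar>)"
  proof (rule ennreal_leI, rule mult_mono)
    show "2 powr \<gamma> * (pi * R\<^sup>2 + layer_const \<gamma> * c * L) \<le> ball_const \<gamma> * R\<^sup>2"
      unfolding mult.assoc[of "layer_const \<gamma>" c L] cL ball_const_def by (simp add: algebra_simps)
    have "(1 / N)\<^sup>2 \<le> R\<^sup>2"
      using N R by (intro power_mono) auto
    then have "1 / N\<^sup>2 \<le> L"
      using L by (simp add: power_one_over)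
    then have "L powr - \<gamma> \<le> N powr (2 * \<gamma>)"
      using powr_neg_le_of_inverse_le[of "N\<^sup>2" L \<gamma>] N \<gamma> by (simp add: powr_powr flip: powr_numeral)
    then show "max L \<bar>t\<^sup>2 - (norm x)\<^sup>2\<bar> powr - \<gamma> \<le> capped_powr (N powr (2 * \<gamma>)) \<gamma> \<bar>t\<^sup>2 - (norm x)\<^sup>2\<bar>"
      using L0 \<gamma> by (intro max_powr_le_capped_powr) auto
  qed (use layer_const_pos[OF \<gamma>] R0 in \<open>auto simp: ball_const_def\<close>)
  finally show ?thesis .
qed

section \<open>Convolution with a rapidly decreasing kernel\<close>

lemma one_le_jbr: "1 \<le> jbr u"
  unfolding jbr_def by (simp add: real_le_rsqrt)

lemma abs_le_jbr: "\<bar>u\<bar> \<le> jbr u"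
  unfolding jbr_def by (simp add: real_le_rsqrt)

lemma jbr_powr_le_sum_balls:
  fixes y :: "'a::real_normed_vector" and N :: real
  assumes N: "0 < N"
  shows "ennreal (jbr (N * norm y) powr - 4)
    \<le> (\<Sum>k. ennreal (16 * (1 / 16) ^ k) * indicator (ball 0 (2 ^ k / N)) y)"
proof -
  define u where "u = N * norm y"
  have u: "0 \<le> u"
    using N by (simp add: u_def)
  have jbr: "jbr u powr - 4 = 1 / jbr u ^ 4"
    using one_le_jbr[of u] by (simp add: powr_minus_divide powr_numeral)
  obtain k where k: "jbr u powr - 4 \<le> 16 * (1 / 16) ^ k" "u < 2 ^ k"
  proof (cases "u < 1")
    case True
    have "1 / jbr u ^ 4 \<le> 1"
      using one_le_power[OF one_le_jbr[of u], of 4] by (simp add: divide_le_eq_1)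
    then show ?thesis
      using that[of 0] True by (simp add: jbr)
  next
    case False
    then obtain n where n: "2 ^ n \<le> u" "u < 2 ^ Suc n"
      using real_dyadic_interval[of u] by auto
    have "(2 ^ n) ^ 4 \<le> jbr u ^ 4"
      using n abs_le_jbr[of u] u by (intro power_mono) auto
    then have "jbr u powr - 4 \<le> 1 / (2 ^ n) ^ 4"
      unfolding jbr using one_le_jbr[of u] by (intro divide_left_mono) (auto simp: zero_less_mult_iff)
    also have "\<dots> = 1 / (2 ^ 4) ^ n"
      by (metis power_mult mult.commute)
    also have "\<dots> = 16 * (1 / 16) ^ Suc n"
      by (simp add: power_one_over)
    finally show ?thesis
      using that n(2) by blast
  qed
  moreover have "y \<in> ball 0 (2 ^ k / N)"
    using k(2) N by (simp add: u_def field_simps)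
  ultimately have "ennreal (jbr u powr - 4) \<le> ennreal (16 * (1 / 16) ^ k) * indicator (ball 0 (2 ^ k / N)) y"
    by (simp add: ennreal_leI)
  also have "\<dots> \<le> (\<Sum>k. ennreal (16 * (1 / 16) ^ k) * indicator (ball 0 (2 ^ k / N)) y)"
    by (rule ennreal_le_suminf)
  finally show ?thesis
    unfolding u_def .
qed

lemma nn_integral_lborel_reflect:
  fixes f :: "'a::euclidean_space \<Rightarrow> ennreal"
  assumes "f \<in> borel_measurable borel"
  shows "(\<integral>\<^sup>+y. f (x - y) \<partial>lborel) = (\<integral>\<^sup>+z. f z \<partial>lborel)"
proof -
  have "(\<integral>\<^sup>+z. f z \<partial>lborel) = (\<integral>\<^sup>+z. f z \<partial>distr lborel borel (\<lambda>y. x + (- 1) *\<^sub>R y))"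
    using lborel_affine[of "- 1" x] by (simp add: density_1)
  also have "\<dots> = (\<integral>\<^sup>+y. f (x - y) \<partial>lborel)"
    using assms by (simp add: nn_integral_distr)
  finally show ?thesis ..
qed

lemma nn_integral_conv_le:
  fixes h \<nu> :: "real^2 \<Rightarrow> real" and N M K \<Phi> :: real
  assumes h: "h \<in> borel_measurable borel" "\<And>z. 0 \<le> h z"
    and N: "0 < N" and M: "0 \<le> M" and K: "0 \<le> K" and \<Phi>: "0 \<le> \<Phi>"
    and decay: "\<And>y. \<bar>\<nu> y\<bar> \<le> M * N\<^sup>2 * jbr (N * norm y) powr - 4"
    and balls: "\<And>R. 1 / N \<le> R \<Longrightarrow>
      (\<integral>\<^sup>+z. ennreal (h z) * indicator (ball x R) z \<partial>lborel) \<le> ennreal (K * R\<^sup>2 * \<Phi>)"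
  shows "(\<integral>\<^sup>+y. ennreal (h (x - y) * \<bar>\<nu> y\<bar>) \<partial>lborel) \<le> ennreal (64 / 3 * K * M * \<Phi>)"
proof -
  define c where "c k = 16 * (1 / 16 :: real) ^ k" for k :: nat
  define R where "R k = 2 ^ k / N" for k :: nat
  define f where "f k y = ennreal (c k) * (ennreal (h (x - y)) * indicator (ball 0 (R k)) y)" for k y
  have [measurable]: "ball (0::real^2) r \<in> sets borel" for r
    by simp
  have f_measurable: "f k \<in> borel_measurable borel" for k
    unfolding f_def using h(1) by measurable
  have pointwise: "ennreal (h (x - y) * \<bar>\<nu> y\<bar>) \<le> ennreal (M * N\<^sup>2) * (\<Sum>k. f k y)" for y
  proof -
    have majorant: "ennreal (jbr (N * norm y) powr - 4) \<le> (\<Sum>k. ennreal (c k) * indicator (ball 0 (R k)) y)"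
      unfolding c_def R_def by (rule jbr_powr_le_sum_balls[OF N])
    have "h (x - y) * \<bar>\<nu> y\<bar> \<le> h (x - y) * (M * N\<^sup>2 * jbr (N * norm y) powr - 4)"
      by (rule mult_left_mono[OF decay h(2)])
    then have "ennreal (h (x - y) * \<bar>\<nu> y\<bar>)
        \<le> ennreal (M * N\<^sup>2) * (ennreal (h (x - y)) * ennreal (jbr (N * norm y) powr - 4))"
      using M h(2)[of "x - y"] by (simp add: ennreal_leI ennreal_mult'[symmetric] mult_ac)
    also have "\<dots> \<le> ennreal (M * N\<^sup>2) * (ennreal (h (x - y)) * (\<Sum>k. ennreal (c k) * indicator (ball 0 (R k)) y))"
      by (intro mult_left_mono majorant) auto
    also have "\<dots> = ennreal (M * N\<^sup>2) * (\<Sum>k. f k y)"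
      unfolding f_def ennreal_suminf_cmult[symmetric] by (simp add: mult_ac)
    finally show ?thesis .
  qed
  have dyadic_term: "(\<integral>\<^sup>+y. f k y \<partial>lborel) \<le> ennreal (16 * K * \<Phi> / N\<^sup>2 * (1 / 4) ^ k)" for k
  proof -
    have "(\<integral>\<^sup>+y. f k y \<partial>lborel) = ennreal (c k) * (\<integral>\<^sup>+z. ennreal (h z) * indicator (ball x (R k)) z \<partial>lborel)"
      using nn_integral_lborel_reflect[of "\<lambda>z. ennreal (h z) * indicator (ball x (R k)) z" x] h(1)
      by (simp add: f_def nn_integral_cmult dist_norm indicator_def)
    also have "\<dots> \<le> ennreal (c k) * ennreal (K * (R k)\<^sup>2 * \<Phi>)"
      using N by (intro mult_left_mono balls) (auto simp: R_def divide_right_mono)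
    also have "\<dots> = ennreal (c k * (K * (R k)\<^sup>2 * \<Phi>))"
      using K \<Phi> by (simp add: c_def ennreal_mult')
    also have "c k * (K * (R k)\<^sup>2 * \<Phi>) = 16 * K * \<Phi> / N\<^sup>2 * ((1 / 16) ^ k * (2 ^ k)\<^sup>2)"
      by (simp add: c_def R_def power_divide mult_ac)
    also have "(1 / 16 :: real) ^ k * (2 ^ k)\<^sup>2 = (1 / 16 * (2 * 2)) ^ k"
      by (simp only: power2_eq_square power_mult_distrib)
    also have "(1 / 16 * (2 * 2) :: real) = 1 / 4"
      by simp
    finally show ?thesis .
  qed
  have "(\<integral>\<^sup>+y. ennreal (h (x - y) * \<bar>\<nu> y\<bar>) \<partial>lborel) \<le> (\<integral>\<^sup>+y. ennreal (M * N\<^sup>2) * (\<Sum>k. f k y) \<partial>lborel)"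
    by (intro nn_integral_mono pointwise)
  also have "\<dots> = ennreal (M * N\<^sup>2) * (\<Sum>k. \<integral>\<^sup>+y. f k y \<partial>lborel)"
    using f_measurable by (simp add: nn_integral_cmult nn_integral_suminf)
  also have "\<dots> \<le> ennreal (M * N\<^sup>2) * (\<Sum>k. ennreal (16 * K * \<Phi> / N\<^sup>2 * (1 / 4) ^ k))"
    by (intro mult_left_mono suminf_le dyadic_term) (auto intro: summableI)
  also have "(\<Sum>k. ennreal (16 * K * \<Phi> / N\<^sup>2 * (1 / 4) ^ k)) = ennreal (16 * K * \<Phi> / N\<^sup>2 * (4 / 3))"
    using K \<Phi> sums_mult[OF geometric_sums[of "1 / 4 :: real"], of "16 * K * \<Phi> / N\<^sup>2"]
    by (intro suminf_ennreal_eq) simp_all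
  also have "ennreal (M * N\<^sup>2) * \<dots> = ennreal (64 / 3 * K * M * \<Phi>)"
    using M K \<Phi> N by (simp add: ennreal_mult'[symmetric] field_simps)
  finally show ?thesis .
qed

lemma integrable_abs_integral_le:
  fixes f :: "'a \<Rightarrow> real"
  assumes f: "f \<in> borel_measurable M" and bound: "(\<integral>\<^sup>+x. ennreal \<bar>f x\<bar> \<partial>M) \<le> ennreal r" and r: "0 \<le> r"
  shows "integrable M f \<and> \<bar>integral\<^sup>L M f\<bar> \<le> r"
proof
  show integrable: "integrable M f"
    using le_less_trans[OF bound ennreal_less_top] by (intro integrableI_bounded[OF f]) simp
  have "ennreal \<bar>integral\<^sup>L M f\<bar> \<le> (\<integral>\<^sup>+x. ennreal \<bar>f x\<bar> \<partial>M)"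
    using integral_norm_bound_ennreal[OF integrable] by simp
  then show "\<bar>integral\<^sup>L M f\<bar> \<le> r"
    using bound r by (simp add: ennreal_le_iff[symmetric] del: ennreal_le_iff)
qed

lemma convR2_radial_le:
  fixes P :: "real \<Rightarrow> real" and \<nu> :: "real^2 \<Rightarrow> real" and N M K \<Phi> :: real
  assumes P: "P \<in> borel_measurable borel" "\<And>r. 0 \<le> P r" and \<nu>: "\<nu> \<in> borel_measurable borel"
    and N: "0 < N" and M: "0 \<le> M" and K: "0 \<le> K" and \<Phi>: "0 \<le> \<Phi>"
    and decay: "\<And>y. \<bar>\<nu> y\<bar> \<le> M * N\<^sup>2 * jbr (N * norm y) powr - 4"
    and balls: "\<And>R. 1 / N \<le> R \<Longrightarrow>
      (\<integral>\<^sup>+z. ennreal (P (norm z)) * indicator (ball x R) z \<partial>lborel) \<le> ennreal (K * R\<^sup>2 * \<Phi>)"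
  shows "integrable lborel (\<lambda>y. P (norm (x - y)) * \<nu> y)
    \<and> \<bar>convR2 (\<lambda>z. P (norm z)) \<nu> x\<bar> \<le> 64 / 3 * K * M * \<Phi>"
proof -
  have "(\<integral>\<^sup>+y. ennreal \<bar>P (norm (x - y)) * \<nu> y\<bar> \<partial>lborel) \<le> ennreal (64 / 3 * K * M * \<Phi>)"
    using nn_integral_conv_le[of "\<lambda>z. P (norm z)", OF _ _ N M K \<Phi> decay balls] P
    by (simp add: abs_mult)
  then show ?thesis
    unfolding convR2_def using P \<nu> K M \<Phi> by (intro integrable_abs_integral_le) auto
qed

section \<open>Reduction from the torus to the plane\<close>

definition lattice_point :: "int \<times> int \<Rightarrow> real^2" where
  "lattice_point p = vector [2 * pi * fst p, 2 * pi * snd p]"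

definition nearest_lattice :: "real^2 \<Rightarrow> int \<times> int" where
  "nearest_lattice z = (round (z$1 / (2 * pi)), round (z$2 / (2 * pi)))"

lemma lattice_point_in_lattice2pi: "lattice_point p \<in> lattice2pi"
  by (auto simp: lattice2pi_def lattice_point_def forall_2)

lemma lattice_point_zero: "lattice_point (0, 0) = 0"
  by (simp add: lattice_point_def vec_eq_iff forall_2)

lemma lattice_point_diff: "lattice_point (p - q) = lattice_point p - lattice_point q"
  by (simp add: lattice_point_def vec_eq_iff forall_2 algebra_simps)

lemma norm_le_of_abs_components_le:
  fixes a b :: "real^2"
  assumes "\<bar>a$1\<bar> \<le> \<bar>b$1\<bar>" "\<bar>a$2\<bar> \<le> \<bar>b$2\<bar>"
  shows "norm a \<le> norm b"
  using assms unfolding norm_vec_def L2_set_def sum_2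
  by (intro real_sqrt_le_mono add_mono) (simp_all add: abs_le_square_iff)

lemma norm_le_abs_components: "norm (z :: real^2) \<le> \<bar>z$1\<bar> + \<bar>z$2\<bar>"
  unfolding norm_vec_def L2_set_def sum_2
  by (intro real_le_lsqrt) (simp_all add: power2_sum)

lemma abs_sub_2pi_mult: "\<bar>y - 2 * pi * of_int m\<bar> = 2 * pi * \<bar>y / (2 * pi) - of_int m\<bar>"
proof -
  have "y - 2 * pi * of_int m = 2 * pi * (y / (2 * pi) - of_int m)"
    by (simp add: field_simps)
  then show ?thesis
    by (simp add: abs_mult)
qed

lemma abs_sub_2pi_round_le: "\<bar>y - 2 * pi * round (y / (2 * pi))\<bar> \<le> \<bar>y - 2 * pi * of_int m\<bar>"
  unfolding abs_sub_2pi_mult by (simp add: round_diff_minimal)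

lemma abs_component_sub_nearest_lattice_le: "\<bar>(z - lattice_point (nearest_lattice z))$i\<bar> \<le> pi"
proof -
  have "\<bar>y - 2 * pi * round (y / (2 * pi))\<bar> \<le> pi" for y
    using of_int_round_abs_le[of "y / (2 * pi)"] unfolding abs_sub_2pi_mult
    by (simp add: abs_minus_commute)
  then have "\<forall>i. \<bar>(z - lattice_point (nearest_lattice z))$i\<bar> \<le> pi"
    unfolding forall_2 by (simp add: lattice_point_def nearest_lattice_def)
  then show ?thesis ..
qed

lemma tnorm_eq_norm_sub_nearest_lattice: "tnorm z = norm (z - lattice_point (nearest_lattice z))"
proof (rule antisym)
  show "tnorm z \<le> norm (z - lattice_point (nearest_lattice z))"
    unfolding tnorm_def using infdist_le[OF lattice_point_in_lattice2pi] by (simp add: dist_norm)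
  have "norm (z - lattice_point (nearest_lattice z)) \<le> dist z a" if "a \<in> lattice2pi" for a
  proof -
    have "\<exists>m::int. a$1 = 2 * pi * m" "\<exists>m::int. a$2 = 2 * pi * m"
      using that by (auto simp: lattice2pi_def)
    then obtain m1 m2 :: int where "a$1 = 2 * pi * m1" "a$2 = 2 * pi * m2"
      by blast
    then show ?thesis
      unfolding dist_norm
      by (intro norm_le_of_abs_components_le)
        (simp_all add: lattice_point_def nearest_lattice_def abs_sub_2pi_round_le)
  qed
  moreover have "lattice2pi \<noteq> {}"
    using lattice_point_in_lattice2pi by blast
  ultimately show "norm (z - lattice_point (nearest_lattice z)) \<le> tnorm z"
    unfolding tnorm_def by (simp add: infdist_notempty cINF_greatest)
qed

lemma round_cell_coordinate: "- pi \<le> y \<Longrightarrow> y < pi \<Longrightarrow> round (y / (2 * pi)) = 0"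
  by (intro round_unique) (simp_all add: field_simps)

lemma tnorm_cell: "z \<in> torus_cell \<Longrightarrow> tnorm z = norm z"
  by (simp add: tnorm_eq_norm_sub_nearest_lattice nearest_lattice_def torus_cell_def
      round_cell_coordinate lattice_point_zero)

lemma tnorm_measurable [measurable]: "tnorm \<in> borel_measurable borel"
  unfolding tnorm_def by (intro borel_measurable_continuous_onI continuous_intros)

lemma torus_cell_borel [measurable]: "torus_cell \<in> sets borel"
proof -
  have cell: "torus_cell = {y \<in> space borel. - pi \<le> y$1 \<and> y$1 < pi \<and> - pi \<le> y$2 \<and> y$2 < pi}"
    by (auto simp: torus_cell_def forall_2)
  show ?thesis
    unfolding cell by measurable
qed

lemma pi_le_norm_sub_lattice_point:
  assumes "\<bar>z$1\<bar> \<le> pi" "\<bar>z$2\<bar> \<le> pi" "p \<noteq> (0, 0)"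
  shows "pi \<le> norm (z - lattice_point p)"
proof -
  have far: "pi \<le> \<bar>y - 2 * pi * of_int m\<bar>" if "\<bar>y\<bar> \<le> pi" "m \<noteq> 0" for y and m :: int
  proof -
    have "1 \<le> \<bar>m\<bar>"
      using that(2) by linarith
    then have "(1::real) \<le> \<bar>of_int m\<bar>"
      by (metis of_int_1_le_iff of_int_abs)
    then have "2 * pi \<le> 2 * pi * \<bar>of_int m\<bar>"
      by simp
    moreover have "2 * pi * \<bar>of_int m\<bar> - \<bar>y\<bar> \<le> \<bar>y - 2 * pi * of_int m\<bar>"
      using abs_triangle_ineq2[of "2 * pi * of_int m" y] by (simp add: abs_mult abs_minus_commute)
    ultimately show ?thesis
      using that(1) by linarith
  qed
  obtain a b where p: "p = (a, b)"
    by fastforce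
  show ?thesis
  proof (cases "a = 0")
    case True
    then have "pi \<le> \<bar>(z - lattice_point p)$2\<bar>"
      using far[of "z$2" b] assms p by (simp add: lattice_point_def)
    then show ?thesis
      using component_le_norm_cart order_trans by blast
  next
    case False
    then have "pi \<le> \<bar>(z - lattice_point p)$1\<bar>"
      using far[of "z$1" a] assms p by (simp add: lattice_point_def)
    then show ?thesis
      using component_le_norm_cart order_trans by blast
  qed
qed

lemma lattice_point_neighbour:
  assumes "\<bar>w$1\<bar> \<le> 2 * pi" "\<bar>w$2\<bar> \<le> 2 * pi"
    and "\<bar>(w - lattice_point q)$1\<bar> \<le> pi" "\<bar>(w - lattice_point q)$2\<bar> \<le> pi"
  shows "q \<in> {-1, 0, 1} \<times> {-1, 0, 1}"
proof -
  have coordinate: "m \<in> {-1, 0, 1}" if "\<bar>y\<bar> \<le> 2 * pi" "\<bar>y - 2 * pi * of_int m\<bar> \<le> pi" for y and m :: int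
  proof -
    have "\<bar>y / (2 * pi)\<bar> \<le> 1" "\<bar>y / (2 * pi) - of_int m\<bar> \<le> 1 / 2"
      using that unfolding abs_sub_2pi_mult by (simp_all add: abs_divide)
    moreover have "\<bar>of_int m\<bar> \<le> \<bar>y / (2 * pi)\<bar> + \<bar>y / (2 * pi) - of_int m\<bar>"
      using abs_triangle_ineq4[of "y / (2 * pi)" "y / (2 * pi) - of_int m"] by (simp only: diff_diff_cancel)
    ultimately have "\<bar>of_int m\<bar> < (2::real)"
      by linarith
    then have "\<bar>m\<bar> < 2"
      by linarith
    then show ?thesis
      by auto
  qed
  have "fst q \<in> {-1, 0, 1}" "snd q \<in> {-1, 0, 1}"
    using coordinate[of "w$1" "fst q"] coordinate[of "w$2" "snd q"] assms
    by (simp_all add: lattice_point_def)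
  then show ?thesis
    by (simp only: mem_Times_iff)
qed

lemma tnorm_diff_cell_translate:
  assumes "y \<in> torus_cell"
  obtains p where "p \<in> {-1, 0, 1} \<times> {-1, 0, 1}"
    and "tnorm (x - y) = norm ((x - lattice_point (nearest_lattice x) - lattice_point p) - y)"
proof -
  define x0 where "x0 = x - lattice_point (nearest_lattice x)"
  define q where "q = nearest_lattice (x - y) - nearest_lattice x"
  have shift: "x - y - lattice_point (nearest_lattice (x - y)) = (x0 - y) - lattice_point q"
    by (simp add: x0_def q_def lattice_point_diff)
  have cell_y: "- pi \<le> y$i \<and> y$i < pi" for i
    using assms by (simp add: torus_cell_def)
  have "\<bar>(x0 - y)$1\<bar> \<le> 2 * pi" "\<bar>(x0 - y)$2\<bar> \<le> 2 * pi"
    using cell_y[of 1] cell_y[of 2]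
      abs_component_sub_nearest_lattice_le[of x 1] abs_component_sub_nearest_lattice_le[of x 2]
    by (auto simp: x0_def abs_le_iff)
  then have "q \<in> {-1, 0, 1} \<times> {-1, 0, 1}"
    using abs_component_sub_nearest_lattice_le[of "x - y"]
    by (intro lattice_point_neighbour[where w="x0 - y"]) (simp_all only: shift)
  moreover have "tnorm (x - y) = norm ((x0 - lattice_point q) - y)"
    using tnorm_eq_norm_sub_nearest_lattice[of "x - y", unfolded shift] by (simp add: algebra_simps)
  ultimately show ?thesis
    using that unfolding x0_def by blast
qed

lemma comparable_at_lattice_translates:
  fixes \<Phi> :: "real \<Rightarrow> real"
  assumes far: "\<And>r r'. 0 \<le> r \<Longrightarrow> r \<le> 2 * pi \<Longrightarrow> pi \<le> r' \<Longrightarrow> \<Phi> r' \<le> B * \<Phi> r"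
    and B: "1 \<le> B" and \<Phi>: "0 \<le> \<Phi> (norm z)" and z: "\<bar>z$1\<bar> \<le> pi" "\<bar>z$2\<bar> \<le> pi"
  shows "\<Phi> (norm (z - lattice_point p)) \<le> B * \<Phi> (norm z)"
proof (cases "p = (0, 0)")
  case True
  then show ?thesis
    using B \<Phi> by (simp add: lattice_point_zero mult_le_cancel_right1)
next
  case False
  have "norm z \<le> 2 * pi"
    using norm_le_abs_components[of z] z by linarith
  then show ?thesis
    using far pi_le_norm_sub_lattice_point[OF z False] by simp
qed

lemma nn_integral_torus_conv_le:
  fixes P \<Phi> :: "real \<Rightarrow> real" and \<nu> :: "real^2 \<Rightarrow> real" and N M K B :: real
  assumes P: "P \<in> borel_measurable borel" "\<And>r. 0 \<le> P r" and \<nu>: "\<nu> \<in> borel_measurable borel"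
    and N: "0 < N" and M: "0 \<le> M" and K: "0 \<le> K" and \<Phi>: "\<And>r. 0 \<le> \<Phi> r" and B: "1 \<le> B"
    and decay: "\<And>y. \<bar>\<nu> y\<bar> \<le> M * N\<^sup>2 * jbr (N * tnorm y) powr - 4"
    and balls: "\<And>(z::real^2) R. 1 / N \<le> R \<Longrightarrow>
      (\<integral>\<^sup>+w. ennreal (P (norm w)) * indicator (ball z R) w \<partial>lborel) \<le> ennreal (K * R\<^sup>2 * \<Phi> (norm z))"
    and far: "\<And>r r'. 0 \<le> r \<Longrightarrow> r \<le> 2 * pi \<Longrightarrow> pi \<le> r' \<Longrightarrow> \<Phi> r' \<le> B * \<Phi> r"
  shows "(\<integral>\<^sup>+y. ennreal \<bar>indicator torus_cell y * (P (tnorm (x - y)) * \<nu> y)\<bar> \<partial>lborel)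
    \<le> ennreal (9 * B * (64 / 3) * K * M * \<Phi> (tnorm x))"
proof -
  define x0 where "x0 = x - lattice_point (nearest_lattice x)"
  define \<mu> where "\<mu> y = indicator torus_cell y * \<nu> y" for y
  define S :: "(int \<times> int) set" where "S = {-1, 0, 1} \<times> {-1, 0, 1}"
  define f where "f p y = ennreal (P (norm ((x0 - lattice_point p) - y)) * \<bar>\<mu> y\<bar>)" for p y
  have x0: "\<bar>x0$1\<bar> \<le> pi" "\<bar>x0$2\<bar> \<le> pi"
    unfolding x0_def by (rule abs_component_sub_nearest_lattice_le)+
  have \<mu>_decay: "\<bar>\<mu> y\<bar> \<le> M * N\<^sup>2 * jbr (N * norm y) powr - 4" for y
    using decay[of y] M by (cases "y \<in> torus_cell") (simp_all add: \<mu>_def tnorm_cell)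
  have pointwise: "ennreal \<bar>indicator torus_cell y * (P (tnorm (x - y)) * \<nu> y)\<bar> \<le> (\<Sum>p\<in>S. f p y)" for y
  proof (cases "y \<in> torus_cell")
    case True
    then obtain q where "q \<in> S" "tnorm (x - y) = norm ((x0 - lattice_point q) - y)"
      unfolding S_def x0_def by (rule tnorm_diff_cell_translate)
    then show ?thesis
      using True P(2) by (auto simp: f_def \<mu>_def S_def abs_mult intro!: member_le_sum[of q])
  qed simp
  have translate: "(\<integral>\<^sup>+y. f p y \<partial>lborel) \<le> ennreal (64 / 3 * K * M * (B * \<Phi> (norm x0)))" for p
  proof -
    have "(\<integral>\<^sup>+y. f p y \<partial>lborel) \<le> ennreal (64 / 3 * K * M * \<Phi> (norm (x0 - lattice_point p)))"
      unfolding f_def using P by (intro nn_integral_conv_le[OF _ _ N M K \<Phi> \<mu>_decay balls]) auto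
    also have "\<dots> \<le> ennreal (64 / 3 * K * M * (B * \<Phi> (norm x0)))"
      using K M B \<Phi> x0 by (intro ennreal_leI mult_left_mono comparable_at_lattice_translates far) auto
    finally show ?thesis .
  qed
  have f_measurable: "f p \<in> borel_measurable borel" for p
    unfolding f_def \<mu>_def using P(1) \<nu> by measurable
  have "(\<integral>\<^sup>+y. ennreal \<bar>indicator torus_cell y * (P (tnorm (x - y)) * \<nu> y)\<bar> \<partial>lborel)
      \<le> (\<integral>\<^sup>+y. (\<Sum>p\<in>S. f p y) \<partial>lborel)"
    by (intro nn_integral_mono pointwise)
  also have "\<dots> = (\<Sum>p\<in>S. \<integral>\<^sup>+y. f p y \<partial>lborel)"
    using f_measurable by (intro nn_integral_sum) auto
  also have "\<dots> \<le> (\<Sum>p\<in>S. ennreal (64 / 3 * K * M * (B * \<Phi> (norm x0))))"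
    by (intro sum_mono translate)
  also have "\<dots> = 9 * ennreal (64 / 3 * K * M * (B * \<Phi> (norm x0)))"
    by (simp add: S_def card_cartesian_product)
  also have "\<dots> = ennreal (9 * (64 / 3 * K * M * (B * \<Phi> (norm x0))))"
    by (simp only: ennreal_mult'[OF zero_le_numeral] ennreal_numeral)
  also have "9 * (64 / 3 * K * M * (B * \<Phi> (norm x0))) = 9 * B * (64 / 3) * K * M * \<Phi> (tnorm x)"
    by (simp add: x0_def tnorm_eq_norm_sub_nearest_lattice[of x] mult_ac)
  finally show ?thesis .
qed

lemma convT2_radial_le:
  fixes P \<Phi> :: "real \<Rightarrow> real" and \<nu> :: "real^2 \<Rightarrow> real" and N M K B :: real
  assumes P: "P \<in> borel_measurable borel" "\<And>r. 0 \<le> P r" and \<nu>: "\<nu> \<in> borel_measurable borel"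
    and N: "0 < N" and M: "0 \<le> M" and K: "0 \<le> K" and \<Phi>: "\<And>r. 0 \<le> \<Phi> r" and B: "1 \<le> B"
    and decay: "\<And>y. \<bar>\<nu> y\<bar> \<le> M * N\<^sup>2 * jbr (N * tnorm y) powr - 4"
    and balls: "\<And>(z::real^2) R. 1 / N \<le> R \<Longrightarrow>
      (\<integral>\<^sup>+w. ennreal (P (norm w)) * indicator (ball z R) w \<partial>lborel) \<le> ennreal (K * R\<^sup>2 * \<Phi> (norm z))"
    and far: "\<And>r r'. 0 \<le> r \<Longrightarrow> r \<le> 2 * pi \<Longrightarrow> pi \<le> r' \<Longrightarrow> \<Phi> r' \<le> B * \<Phi> r"
  shows "set_integrable lborel torus_cell (\<lambda>y. P (tnorm (x - y)) * \<nu> y)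
    \<and> \<bar>convT2 (\<lambda>z. P (tnorm z)) \<nu> x\<bar> \<le> 9 * B * (64 / 3) * K * M * \<Phi> (tnorm x)"
  unfolding set_integrable_def convT2_def set_lebesgue_integral_def
  using nn_integral_torus_conv_le[OF P \<nu> N M K \<Phi> B decay balls far] P \<nu> B K M \<Phi>[of "tnorm x"]
  by (intro integrable_abs_integral_le) auto

lemma capped_powr_far_le:
  assumes "1 \<le> c" "0 \<le> \<gamma>" "\<gamma> \<le> 1" "1 \<le> d'" "0 \<le> d" "d \<le> D" "1 \<le> D"
  shows "capped_powr c \<gamma> d' \<le> D * capped_powr c \<gamma> d"
proof -
  have "capped_powr c \<gamma> d' \<le> 1"
    using assms powr_neg_antimono[of 1 d' \<gamma>] by (auto simp: capped_powr_def)
  also have "1 \<le> D * capped_powr c \<gamma> d"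
  proof (cases "d = 0")
    case False
    have "D powr - 1 \<le> D powr - \<gamma>"
      using assms by (intro powr_mono) auto
    also have "\<dots> \<le> d powr - \<gamma>"
      using assms False by (intro powr_neg_antimono) auto
    finally have "1 / D \<le> min c (d powr - \<gamma>)"
      using assms by (simp add: powr_minus_divide order_trans[OF _ assms(1)] divide_le_eq_1)
    then show ?thesis
      using False assms by (simp add: capped_powr_def pos_divide_le_eq mult.commute min_def)
  qed (use assms mult_mono[of 1 D 1 c] in \<open>simp add: capped_powr_def\<close>)
  finally show ?thesis .
qed

lemma one_le_logfac: "1 \<le> logfac N t r"
  unfolding logfac_def by (rule one_le_jbr)

lemma capped_powr_le_bound1: "capped_powr (real N powr \<gamma>) \<gamma> \<bar>t - r\<bar> \<le> bound1 N t \<gamma> r"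
proof -
  have "bound1 N t \<gamma> r = capped_powr (real N powr \<gamma>) \<gamma> \<bar>t - r\<bar> * logfac N t r"
    by (simp add: bound1_def capped_powr_def)
  then show ?thesis
    using one_le_logfac[of N t r] capped_powr_nonneg[of "real N powr \<gamma>" \<gamma> "\<bar>t - r\<bar>"]
    by (simp add: mult_le_cancel_left1)
qed

lemma capped_powr_le_bound2:
  assumes "0 \<le> t" "0 \<le> r"
  shows "capped_powr (real N powr (2 * \<gamma>)) \<gamma> \<bar>t\<^sup>2 - r\<^sup>2\<bar> \<le> bound2 N t \<gamma> r"
proof -
  have "t\<^sup>2 = r\<^sup>2 \<longleftrightarrow> r = t"
    using assms by (auto simp: power2_eq_iff_nonneg)
  then have "bound2 N t \<gamma> r = capped_powr (real N powr (2 * \<gamma>)) \<gamma> \<bar>t\<^sup>2 - r\<^sup>2\<bar> * logfac N t r"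
    by (simp add: bound2_def capped_powr_def)
  then show ?thesis
    using one_le_logfac[of N t r] capped_powr_nonneg[of "real N powr (2 * \<gamma>)" \<gamma> "\<bar>t\<^sup>2 - r\<^sup>2\<bar>"]
    by (simp add: mult_le_cancel_left1)
qed

lemma capped_powr_circle_far:
  assumes "0 < t" "t \<le> 1" "1 \<le> c" "0 \<le> \<gamma>" "\<gamma> \<le> 1" "0 \<le> r" "r \<le> 2 * pi" "pi \<le> r'"
  shows "capped_powr c \<gamma> \<bar>t - r'\<bar> \<le> 64 * capped_powr c \<gamma> \<bar>t - r\<bar>"
  using assms pi_gt3 pi_less_4 by (intro capped_powr_far_le) auto

lemma capped_powr_square_circle_far:
  assumes t: "0 < t" "t \<le> 1" and "1 \<le> c" "0 \<le> \<gamma>" "\<gamma> \<le> 1" and r: "0 \<le> r" "r \<le> 2 * pi" "pi \<le> r'"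
  shows "capped_powr c \<gamma> \<bar>t\<^sup>2 - r'\<^sup>2\<bar> \<le> 64 * capped_powr c \<gamma> \<bar>t\<^sup>2 - r\<^sup>2\<bar>"
proof (rule capped_powr_far_le)
  have "3 * 3 \<le> r' * r'"
    using r pi_gt3 by (intro mult_mono) auto
  moreover have "t * t \<le> 1 * 1"
    using t by (intro mult_mono) auto
  ultimately show "1 \<le> \<bar>t\<^sup>2 - r'\<^sup>2\<bar>"
    by (simp add: power2_eq_square)
  have "r * r \<le> 8 * 8"
    using r pi_less_4 by (intro mult_mono) auto
  moreover have "0 \<le> r * r" "0 \<le> t * t"
    by simp_all
  ultimately show "\<bar>t\<^sup>2 - r\<^sup>2\<bar> \<le> 64"
    using \<open>t * t \<le> 1 * 1\<close> unfolding power2_eq_square abs_le_iff by linarith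
qed (use assms in auto)

lemma convR2_profile_bounds:
  fixes N :: nat and \<nu> :: "real^2 \<Rightarrow> real" and x :: "real^2"
  assumes \<gamma>: "0 < \<gamma>" "\<gamma> < 1" and N: "1 \<le> N" and t: "0 < t" and M: "0 \<le> M"
    and \<nu>: "\<nu> \<in> borel_measurable lborel"
    and decay: "\<And>y. \<bar>\<nu> y\<bar> \<le> M * real N ^ 2 * jbr (real N * norm y) powr - 4"
  shows "integrable lborel (\<lambda>y. Hprof t \<gamma> (norm (x - y)) * \<nu> y)
    \<and> integrable lborel (\<lambda>y. Htprof t \<gamma> (norm (x - y)) * \<nu> y)
    \<and> \<bar>convR2 (\<lambda>z. Hprof t \<gamma> (norm z)) \<nu> x\<bar> \<le> 64 / 3 * ball_const \<gamma> * M * bound1 N t \<gamma> (norm x)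
    \<and> \<bar>convR2 (\<lambda>z. Htprof t \<gamma> (norm z)) \<nu> x\<bar> \<le> 64 / 3 * ball_const \<gamma> * M * bound2 N t \<gamma> (norm x)"
proof -
  have N0: "0 < real N"
    using N by simp
  have K: "0 \<le> 64 / 3 * ball_const \<gamma> * M"
    using ball_const_pos[OF \<gamma>] M by simp
  have "integrable lborel (\<lambda>y. Hprof t \<gamma> (norm (x - y)) * \<nu> y)
    \<and> \<bar>convR2 (\<lambda>z. Hprof t \<gamma> (norm z)) \<nu> x\<bar>
      \<le> 64 / 3 * ball_const \<gamma> * M * capped_powr (real N powr \<gamma>) \<gamma> \<bar>t - norm x\<bar>"
    using ball_const_pos[OF \<gamma>] M
    by (intro convR2_radial_le[OF Hprof_measurable Hprof_nonneg \<nu>[simplified] N0] nn_integral_ball_Hprof_le[OF \<gamma> N0]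
        capped_powr_nonneg decay) auto
  moreover have "integrable lborel (\<lambda>y. Htprof t \<gamma> (norm (x - y)) * \<nu> y)
    \<and> \<bar>convR2 (\<lambda>z. Htprof t \<gamma> (norm z)) \<nu> x\<bar>
      \<le> 64 / 3 * ball_const \<gamma> * M * capped_powr (real N powr (2 * \<gamma>)) \<gamma> \<bar>t\<^sup>2 - (norm x)\<^sup>2\<bar>"
    using ball_const_pos[OF \<gamma>] M
    by (intro convR2_radial_le[OF Htprof_measurable Htprof_nonneg \<nu>[simplified] N0] nn_integral_ball_Htprof_le[OF \<gamma> N0 _ t]
        capped_powr_nonneg decay) auto
  moreover have "64 / 3 * ball_const \<gamma> * M * capped_powr (real N powr \<gamma>) \<gamma> \<bar>t - norm x\<bar>
      \<le> 64 / 3 * ball_const \<gamma> * M * bound1 N t \<gamma> (norm x)"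
    using K by (intro mult_left_mono capped_powr_le_bound1)
  moreover have "64 / 3 * ball_const \<gamma> * M * capped_powr (real N powr (2 * \<gamma>)) \<gamma> \<bar>t\<^sup>2 - (norm x)\<^sup>2\<bar>
      \<le> 64 / 3 * ball_const \<gamma> * M * bound2 N t \<gamma> (norm x)"
    using K t by (intro mult_left_mono capped_powr_le_bound2) auto
  ultimately show ?thesis
    by linarith
qed

lemma convT2_profile_bounds:
  fixes N :: nat and \<nu> :: "real^2 \<Rightarrow> real" and x :: "real^2"
  assumes \<gamma>: "0 < \<gamma>" "\<gamma> < 1" and N: "1 \<le> N" and t: "0 < t" "t \<le> 1" and M: "0 \<le> M"
    and \<nu>: "\<nu> \<in> borel_measurable lborel"
    and decay: "\<And>y. \<bar>\<nu> y\<bar> \<le> M * real N ^ 2 * jbr (real N * tnorm y) powr - 4"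
  shows "set_integrable lborel torus_cell (\<lambda>y. Hprof t \<gamma> (tnorm (x - y)) * \<nu> y)
    \<and> set_integrable lborel torus_cell (\<lambda>y. Htprof t \<gamma> (tnorm (x - y)) * \<nu> y)
    \<and> \<bar>convT2 (\<lambda>z. Hprof t \<gamma> (tnorm z)) \<nu> x\<bar> \<le> 9 * 64 * (64 / 3) * ball_const \<gamma> * M * bound1 N t \<gamma> (tnorm x)
    \<and> \<bar>convT2 (\<lambda>z. Htprof t \<gamma> (tnorm z)) \<nu> x\<bar> \<le> 9 * 64 * (64 / 3) * ball_const \<gamma> * M * bound2 N t \<gamma> (tnorm x)"
proof -
  have N0: "0 < real N"
    using N by simp
  have c1: "1 \<le> real N powr \<gamma>" "1 \<le> real N powr (2 * \<gamma>)"
    using N \<gamma> by (simp_all add: ge_one_powr_ge_zero)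
  have "set_integrable lborel torus_cell (\<lambda>y. Hprof t \<gamma> (tnorm (x - y)) * \<nu> y)
    \<and> \<bar>convT2 (\<lambda>z. Hprof t \<gamma> (tnorm z)) \<nu> x\<bar>
      \<le> 9 * 64 * (64 / 3) * ball_const \<gamma> * M * capped_powr (real N powr \<gamma>) \<gamma> \<bar>t - tnorm x\<bar>"
    using ball_const_pos[OF \<gamma>] \<gamma> N0 t c1 decay
    by (intro convT2_radial_le[OF Hprof_measurable Hprof_nonneg \<nu>[simplified] N0 M]
        capped_powr_nonneg nn_integral_ball_Hprof_le capped_powr_circle_far) auto
  moreover have "set_integrable lborel torus_cell (\<lambda>y. Htprof t \<gamma> (tnorm (x - y)) * \<nu> y)
    \<and> \<bar>convT2 (\<lambda>z. Htprof t \<gamma> (tnorm z)) \<nu> x\<bar>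
      \<le> 9 * 64 * (64 / 3) * ball_const \<gamma> * M * capped_powr (real N powr (2 * \<gamma>)) \<gamma> \<bar>t\<^sup>2 - (tnorm x)\<^sup>2\<bar>"
    using ball_const_pos[OF \<gamma>] \<gamma> N0 t c1 decay
    by (intro convT2_radial_le[OF Htprof_measurable Htprof_nonneg \<nu>[simplified] N0 M]
        capped_powr_nonneg nn_integral_ball_Htprof_le capped_powr_square_circle_far) auto
  moreover have "9 * 64 * (64 / 3) * ball_const \<gamma> * M * capped_powr (real N powr \<gamma>) \<gamma> \<bar>t - tnorm x\<bar>
      \<le> 9 * 64 * (64 / 3) * ball_const \<gamma> * M * bound1 N t \<gamma> (tnorm x)"
    using ball_const_pos[OF \<gamma>] M by (intro mult_left_mono capped_powr_le_bound1) auto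
  moreover have "9 * 64 * (64 / 3) * ball_const \<gamma> * M * capped_powr (real N powr (2 * \<gamma>)) \<gamma> \<bar>t\<^sup>2 - (tnorm x)\<^sup>2\<bar>
      \<le> 9 * 64 * (64 / 3) * ball_const \<gamma> * M * bound2 N t \<gamma> (tnorm x)"
    using ball_const_pos[OF \<gamma>] M t
    by (intro mult_left_mono capped_powr_le_bound2) (auto simp: tnorm_def infdist_nonneg)
  ultimately show ?thesis
    by linarith
qed

theorem lemma3p3:
  fixes \<gamma> :: real and C :: "real \<Rightarrow> real"
  assumes "0 < \<gamma>" and "\<gamma> \<le> 1/2"
  shows
   "(\<exists>K. \<forall>(N::nat) (\<nu>::real^2 \<Rightarrow> real) t x.
        N \<ge> 1 \<longrightarrow> \<nu> \<in> borel_measurable lborel \<longrightarrow>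
        (\<forall>A\<ge>1. \<forall>y. \<bar>\<nu> y\<bar> \<le> C A * real N ^ 2 * jbr (real N * norm y) powr (- A)) \<longrightarrow>
        0 < t \<longrightarrow> t \<le> 1 \<longrightarrow> norm x < 10 \<longrightarrow>
          integrable lborel (\<lambda>y. Hprof t \<gamma> (norm (x - y)) * \<nu> y)
        \<and> integrable lborel (\<lambda>y. Htprof t \<gamma> (norm (x - y)) * \<nu> y)
        \<and> \<bar>convR2 (\<lambda>z. Hprof t \<gamma> (norm z)) \<nu> x\<bar> \<le> K * bound1 N t \<gamma> (norm x)
        \<and> \<bar>convR2 (\<lambda>z. Htprof t \<gamma> (norm z)) \<nu> x\<bar> \<le> K * bound2 N t \<gamma> (norm x))
  \<and> (\<exists>K. \<forall>(N::nat) (\<nu>::real^2 \<Rightarrow> real) t x.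
        N \<ge> 1 \<longrightarrow> \<nu> \<in> borel_measurable lborel \<longrightarrow>
        (\<forall>y k. k \<in> lattice2pi \<longrightarrow> \<nu> (y + k) = \<nu> y) \<longrightarrow>
        (\<forall>A\<ge>1. \<forall>y. \<bar>\<nu> y\<bar> \<le> C A * real N ^ 2 * jbr (real N * tnorm y) powr (- A)) \<longrightarrow>
        0 < t \<longrightarrow> t \<le> 1 \<longrightarrow>
          set_integrable lborel torus_cell (\<lambda>y. Hprof t \<gamma> (tnorm (x - y)) * \<nu> y)
        \<and> set_integrable lborel torus_cell (\<lambda>y. Htprof t \<gamma> (tnorm (x - y)) * \<nu> y)
        \<and> \<bar>convT2 (\<lambda>z. Hprof t \<gamma> (tnorm z)) \<nu> x\<bar> \<le> K * bound1 N t \<gamma> (tnorm x)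
        \<and> \<bar>convT2 (\<lambda>z. Htprof t \<gamma> (tnorm z)) \<nu> x\<bar> \<le> K * bound2 N t \<gamma> (tnorm x))"
proof -
  have \<gamma>: "0 < \<gamma>" "\<gamma> < 1"
    using assms by auto
  define M where "M = max (C 4) 0"
  have M: "0 \<le> M"
    by (simp add: M_def)
  have decay: "\<bar>\<nu> y\<bar> \<le> M * real N ^ 2 * jbr (real N * n y) powr - 4"
    if "\<forall>A\<ge>1. \<forall>y. \<bar>\<nu> y\<bar> \<le> C A * real N ^ 2 * jbr (real N * n y) powr (- A)"
    for \<nu> :: "real^2 \<Rightarrow> real" and N :: nat and n :: "real^2 \<Rightarrow> real" and y
  proof -
    have "\<bar>\<nu> y\<bar> \<le> C 4 * real N ^ 2 * jbr (real N * n y) powr - 4"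
      using that by force
    also have "\<dots> \<le> M * real N ^ 2 * jbr (real N * n y) powr - 4"
      unfolding M_def by (intro mult_right_mono) auto
    finally show ?thesis .
  qed
  show ?thesis
    by (rule conjI[OF exI[of _ "64 / 3 * ball_const \<gamma> * M"] exI[of _ "9 * 64 * (64 / 3) * ball_const \<gamma> * M"]];
        intro allI impI;
        rule convR2_profile_bounds[OF \<gamma> _ _ M _ decay[where n=norm]]
          convT2_profile_bounds[OF \<gamma> _ _ _ M _ decay[where n=tnorm]];
        assumption)
qed

end
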